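(* Let $d\ge2$, $n\ge1$, and $k\ge 2\lceil\frac{n}{2d-2}\rceil$. Then for every $\mathbf{y}\in\{-1,1\}^n$ and for Lebesgue-almost every $X\in\mathbb{R}^{d\times n}$, there exist $\tilde W\in\mathbb{R}^{2k\times d}$ and $\tilde v>0$ such that, with $\tilde{\mathbf{v}}=(\tilde v,\dots,\tilde v,-\tilde v,\dots,-\tilde v)\in\mathbb{R}^{2k}$ ($k$ entries $\tilde v$ followed by $k$ entries $-\tilde v$), one has $\mathbf{y}=\tilde{\mathbf{v}}^\top\sigma(\tilde WX)$.
   Context: $\sigma(z)=\max\{\alpha z,z\}$ with a fixed $0<\alpha<1$ (Leaky ReLU), applied entrywise; the columns of $X$ are the data points, so $\tilde{\mathbf{v}}^\top\sigma(\tilde WX)\in\mathbb{R}^{1\times n}$ is the vector of network outputs on the $n$ points. *)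

theory Defs
  imports "HOL-Analysis.Analysis"
begin

definition leaky_relu :: "real \<Rightarrow> real \<Rightarrow> real" where
  "leaky_relu \<alpha> z = max (\<alpha> * z) z"

definition vtilde :: "nat \<Rightarrow> real \<Rightarrow> nat \<Rightarrow> real" where
  "vtilde k v i = (if i < k then v else - v)"

end

theory Submission
  imports Defs
begin

(*
  Columns x_j of X in general position (no column lies in the span of fewer than d others)
  is an almost-everywhere property, and the construction needs only n <= k d, for arbitrary
  real labels.  Pick v with v.x_j /= 0 and u making the ratios r_j = (u.x_j)/(v.x_j)
  distinct, and cut the points, sorted by r_j, into k blocks of at most d points.  The
  hyperplanes b_i = t_i v - u, with thresholds t_i between blocks, meet every x_j with a sign
  that depends only on the sign of v.x_j and on whether x_j lies in one of the first i blocks.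
  A pair of neurons c b_i + delta_i and c b_i with output weights 1 and -1 contributes, for
  large c, exactly slope_ij * delta_i.x_j, with slope 1 or alpha according to that sign.
  The resulting linear system in the delta_i is block-triangular along the partial sums of
  the delta_i, and each block, having at most d points in general position, can be solved
  by interpolation.
*)

definition general_position :: "('j \<Rightarrow> 'a::euclidean_space) \<Rightarrow> bool" where
  "general_position x \<longleftrightarrow>
     (\<forall>j T. finite T \<longrightarrow> j \<notin> T \<longrightarrow> card T < DIM('a) \<longrightarrow> x j \<notin> span (x ` T))"

lemma in_span_image_imp_sum:
  fixes f :: "'j \<Rightarrow> 'a::real_vector"
  assumes "finite T" "v \<in> span (f ` T)"
  shows "\<exists>c. v = (\<Sum>j\<in>T. c j *\<^sub>R f j)"
  using assms
proof (induction T arbitrary: v rule: finite_induct)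
  case (insert a T)
  then obtain c0 where "v - c0 *\<^sub>R f a \<in> span (f ` T)"
    by (auto simp: span_insert)
  with insert.IH obtain c where c: "v - c0 *\<^sub>R f a = (\<Sum>j\<in>T. c j *\<^sub>R f j)"
    by blast
  have "(\<Sum>j\<in>insert a T. (c(a := c0)) j *\<^sub>R f j) = c0 *\<^sub>R f a + (\<Sum>j\<in>T. c j *\<^sub>R f j)"
    using insert.hyps by (auto intro!: sum.cong)
  also have "\<dots> = v"
    using c by (simp add: algebra_simps)
  finally show ?case
    by metis
qed simp

lemma real_polynomial_function_vec_nth_nth:
  "real_polynomial_function (\<lambda>Y :: real^'n^'d. Y $ a $ b)"
  by (rule real_polynomial_function.intros(1))
    (use bounded_linear_compose[OF bounded_linear_vec_nth[of b] bounded_linear_vec_nth[of a]]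
      in \<open>simp add: o_def\<close>)

lemma polynomial_function_vec_vec:
  assumes "\<And>a b. real_polynomial_function (\<lambda>Y. F Y $ a $ b)"
  shows "polynomial_function (F :: 'a::real_normed_vector \<Rightarrow> real^'n^'d)"
  unfolding polynomial_function_iff_Basis_inner
  using assms by (auto simp: Basis_vec_def inner_axis)

lemma negligible_column_in_span:
  fixes j0 :: "'n::finite" and T :: "'n set"
  assumes "j0 \<notin> T" "card T < CARD('d::finite)"
  shows "negligible {X :: real^'n^'d. column j0 X \<in> span ((\<lambda>j. column j X) ` T)}"
proof -
  fix r0 :: 'd
  have "card T \<le> card (- {r0})"
    using assms(2) by (simp add: Compl_eq_Diff_UNIV)
  then obtain \<rho> where \<rho>: "\<rho> ` T \<subseteq> - {r0}" "inj_on \<rho> T"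
    using card_le_inj[of T "- {r0}"] by auto
  \<comment> \<open>The coefficients of the linear combination are stored in column j0 at the rows \<rho> ` T,
     so the set is the image of the hyperplane Y$r0$j0 = 0 under a polynomial map.\<close>
  define F :: "real^'n^'d \<Rightarrow> real^'n^'d" where
    "F Y = (\<chi> a b. if b = j0 then (\<Sum>j\<in>T. Y $ \<rho> j $ j0 * Y $ a $ j) else Y $ a $ b)" for Y
  define H where "H = {Y :: real^'n^'d. axis r0 (axis j0 1) \<bullet> Y = 0}"
  have "real_polynomial_function (\<lambda>Y. F Y $ a $ b)" for a b
    by (cases "b = j0") (auto simp: F_def intro!: real_polynomial_function_vec_nth_nth
      real_polynomial_function_sum real_polynomial_function.intros(4))
  then have "F differentiable_on H"
    by (intro differentiable_on_polynomial_function polynomial_function_vec_vec)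
  moreover have "negligible H"
    unfolding H_def by (rule negligible_hyperplane) (simp add: axis_eq_0_iff)
  moreover have "{X. column j0 X \<in> span ((\<lambda>j. column j X) ` T)} \<subseteq> F ` H"
  proof
    fix X :: "real^'n^'d"
    assume "X \<in> {X. column j0 X \<in> span ((\<lambda>j. column j X) ` T)}"
    then obtain c where c: "column j0 X = (\<Sum>j\<in>T. c j *\<^sub>R column j X)"
      using in_span_image_imp_sum[of T] by auto
    define Y :: "real^'n^'d" where
      "Y = (\<chi> a b. if b = j0 then (if a \<in> \<rho> ` T then c (the_inv_into T \<rho> a) else 0) else X $ a $ b)"
    have "Y \<in> H"
      using \<rho>(1) by (auto simp: H_def Y_def inner_axis')
    moreover have "F Y $ a $ b = X $ a $ b" for a b
    proof (cases "b = j0")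
      case True
      then have "F Y $ a $ b = (\<Sum>j\<in>T. c j * X $ a $ j)"
        using assms(1) \<rho>(2) by (auto simp: F_def Y_def the_inv_into_f_f intro!: sum.cong)
      also have "\<dots> = X $ a $ b"
        using True arg_cong[OF c, of "\<lambda>z. z $ a"] by (simp add: column_def)
      finally show ?thesis .
    qed (simp add: F_def Y_def)
    ultimately show "X \<in> F ` H"
      by (metis image_eqI vec_eq_iff)
  qed
  ultimately show ?thesis
    using negligible_differentiable_image_negligible[OF order_refl] negligible_subset by blast
qed

lemma AE_columns_general_position:
  "AE X in (lborel :: (real^'n::finite^'d::finite) measure). general_position (\<lambda>j. column j X)"
proof -
  define P :: "('n \<times> 'n set) set" where "P = {(j, T). j \<notin> T \<and> card T < CARD('d)}"
  define B where "B = (\<Union>(j, T)\<in>P. {X :: real^'n^'d. column j X \<in> span ((\<lambda>j. column j X) ` T)})"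
  have "negligible B"
    unfolding B_def by (rule negligible_Union) (auto simp: P_def intro!: negligible_column_in_span)
  then have "B \<in> null_sets lebesgue"
    by (simp add: negligible_iff_null_sets)
  then have "AE X in lebesgue. general_position (\<lambda>j. column j (X :: real^'n^'d))"
    by (rule AE_I') (auto simp: general_position_def B_def P_def)
  then show ?thesis
    by (simp add: AE_completion_iff)
qed

lemma exists_inner_nonzero_finite:
  fixes A :: "'a::euclidean_space set"
  assumes "finite A" "0 \<notin> A"
  shows "\<exists>u. \<forall>a\<in>A. a \<bullet> u \<noteq> 0"
proof (rule ccontr)
  assume "\<nexists>u. \<forall>a\<in>A. a \<bullet> u \<noteq> 0"
  then have "UNIV = (\<Union>a\<in>A. {u. a \<bullet> u = 0})"
    by auto
  moreover have "negligible (\<Union>a\<in>A. {u. a \<bullet> u = 0})"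
    using assms by (intro negligible_Union) (auto intro!: negligible_hyperplane)
  ultimately show False
    by simp
qed

lemma inner_interpolation:
  fixes f :: "'j \<Rightarrow> 'a::euclidean_space"
  assumes "finite J" "\<And>j. j \<in> J \<Longrightarrow> f j \<notin> span (f ` (J - {j}))"
  shows "\<exists>s. \<forall>j\<in>J. s \<bullet> f j = c j"
proof -
  have "\<exists>z. (\<forall>w \<in> span (f ` (J - {j})). z \<bullet> w = 0) \<and> z \<bullet> f j \<noteq> 0" if "j \<in> J" for j
  proof -
    obtain w z where wz: "w \<in> span (f ` (J - {j}))"
      "\<And>w'. w' \<in> span (f ` (J - {j})) \<Longrightarrow> orthogonal z w'" "f j = w + z"
      using orthogonal_subspace_decomp_exists by blast
    have "z \<noteq> 0"
      using wz assms(2) that by auto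
    moreover have "z \<bullet> f j = z \<bullet> z"
      using wz by (simp add: orthogonal_def inner_add_right)
    ultimately show ?thesis
      using wz(2) by (auto simp: orthogonal_def intro!: exI[of _ z])
  qed
  then obtain z where z: "\<And>j w. j \<in> J \<Longrightarrow> w \<in> span (f ` (J - {j})) \<Longrightarrow> z j \<bullet> w = 0"
    "\<And>j. j \<in> J \<Longrightarrow> z j \<bullet> f j \<noteq> 0"
    by metis
  define s where "s = (\<Sum>i\<in>J. (c i / (z i \<bullet> f i)) *\<^sub>R z i)"
  have "s \<bullet> f j = c j" if "j \<in> J" for j
  proof -
    have "z i \<bullet> f j = 0" if "i \<in> J" "i \<noteq> j" for i
      using z(1)[OF that(1)] \<open>j \<in> J\<close> that(2) by (simp add: span_base)
    then have "s \<bullet> f j = (\<Sum>i\<in>J. if i = j then c j else 0)"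
      unfolding s_def inner_sum_left using z(2)[OF that] by (intro sum.cong) auto
    then show ?thesis
      using assms(1) that by simp
  qed
  then show ?thesis
    by blast
qed

lemma leaky_relu_pos: "\<alpha> \<le> 1 \<Longrightarrow> 0 < z \<Longrightarrow> leaky_relu \<alpha> z = z"
  unfolding leaky_relu_def by (simp add: mult_le_cancel_right1)

lemma leaky_relu_neg: "\<alpha> \<le> 1 \<Longrightarrow> z < 0 \<Longrightarrow> leaky_relu \<alpha> z = \<alpha> * z"
  unfolding leaky_relu_def by (auto simp: max_def mult_le_cancel_right1)

lemma leaky_relu_add_small:
  assumes "\<alpha> \<le> 1" "\<bar>e\<bar> < \<bar>z\<bar>"
  shows "leaky_relu \<alpha> (z + e) - leaky_relu \<alpha> z = (if 0 < z then 1 else \<alpha>) * e"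
proof (cases "0 < z")
  case True
  then show ?thesis
    using assms by (simp add: leaky_relu_pos)
next
  case False
  then have "z < 0" "z + e < 0"
    using assms by linarith+
  then show ?thesis
    using assms by (simp add: leaky_relu_neg algebra_simps)
qed

lemma exists_scale_dominating:
  fixes e z :: "'i \<Rightarrow> real"
  assumes "finite I" "\<And>i. i \<in> I \<Longrightarrow> z i \<noteq> 0"
  shows "\<exists>c>0. \<forall>i\<in>I. \<bar>e i\<bar> < c * \<bar>z i\<bar>"
proof (intro exI conjI ballI)
  define c where "c = 1 + (\<Sum>i\<in>I. \<bar>e i\<bar> / \<bar>z i\<bar>)"
  have "c \<ge> 1"
    by (simp add: c_def sum_nonneg)
  then show "c > 0"
    by simp
  fix i assume i: "i \<in> I"
  have "\<bar>e i\<bar> / \<bar>z i\<bar> \<le> (\<Sum>i\<in>I. \<bar>e i\<bar> / \<bar>z i\<bar>)"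
    using assms(1) i by (intro member_le_sum) auto
  then have "\<bar>e i\<bar> / \<bar>z i\<bar> < c"
    by (simp add: c_def)
  then show "\<bar>e i\<bar> < c * \<bar>z i\<bar>"
    using assms(2)[OF i] by (simp add: divide_less_eq)
qed

lemma sum_two_slopes_telescope:
  fixes Z :: "nat \<Rightarrow> real"
  assumes "g \<le> k"
  shows "(\<Sum>i<k. (if i < g then c1 else c2) * (Z (Suc i) - Z i)) = c1 * (Z g - Z 0) + c2 * (Z k - Z g)"
  using assms
proof (induction k rule: dec_induct)
  case base
  show ?case
    by (simp add: sum_distrib_left[symmetric] sum_lessThan_telescope)
next
  case (step m)
  then show ?case
    by (simp add: algebra_simps)
qed

lemma sum_lessThan_double:
  "(\<Sum>i<2 * k. f i) = (\<Sum>i<k. f i + f (i + k))" for f :: "nat \<Rightarrow> 'a::comm_monoid_add"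
proof -
  have "(\<Sum>i<2 * k. f i) = (\<Sum>i\<in>{0..<k}. f i) + (\<Sum>i\<in>{0 + k..<k + k}. f i)"
    by (simp add: mult_2 lessThan_atLeast0 sum.atLeastLessThan_concat)
  then show ?thesis
    by (simp only: sum.shift_bounds_nat_ivl) (simp add: lessThan_atLeast0 sum.distrib)
qed

lemma general_position_nonzero:
  assumes "general_position x"
  shows "x j \<noteq> 0"
  using assms[unfolded general_position_def, rule_format, of "{}" j] by auto

lemma general_position_not_parallel:
  fixes x :: "'j \<Rightarrow> 'a::euclidean_space"
  assumes "general_position x" "DIM('a) \<ge> 2" "j \<noteq> j'"
  shows "x j \<notin> span {x j'}"
  using assms(1)[unfolded general_position_def, rule_format, of "{j'}" j] assms(2,3) by auto

lemma general_position_inner_interpolation: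
  fixes x :: "'j \<Rightarrow> 'a::euclidean_space"
  assumes "general_position x" "finite J" "card J \<le> DIM('a)"
  shows "\<exists>s. \<forall>j\<in>J. s \<bullet> x j = c j"
proof (rule inner_interpolation[OF assms(2)])
  fix j assume "j \<in> J"
  then have "card (J - {j}) < DIM('a)"
    using assms(2,3) card_gt_0_iff[of J] by (auto simp: card_Diff_singleton)
  then show "x j \<notin> span (x ` (J - {j}))"
    using assms(1,2) unfolding general_position_def by blast
qed

lemma exists_injective_ratio:
  fixes x :: "'j::finite \<Rightarrow> 'a::euclidean_space"
  assumes "\<And>j. x j \<noteq> 0" "\<And>j j'. j \<noteq> j' \<Longrightarrow> x j \<notin> span {x j'}"
  obtains u v where "\<And>j. v \<bullet> x j \<noteq> 0" "inj (\<lambda>j. (u \<bullet> x j) / (v \<bullet> x j))"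
proof -
  have "0 \<notin> range x"
    using assms(1) by auto
  then have "\<exists>v. \<forall>a\<in>range x. a \<bullet> v \<noteq> 0"
    by (intro exists_inner_nonzero_finite) simp
  then obtain v where "\<forall>a\<in>range x. a \<bullet> v \<noteq> 0"
    by blast
  then have v: "v \<bullet> x j \<noteq> 0" for j
    by (simp add: inner_commute)
  define A where "A = (\<lambda>(j, j'). x j /\<^sub>R (v \<bullet> x j) - x j' /\<^sub>R (v \<bullet> x j')) ` {(j, j'). j \<noteq> j'}"
  have "0 \<notin> A"
  proof
    assume "0 \<in> A"
    then obtain j j' where "j \<noteq> j'" "x j /\<^sub>R (v \<bullet> x j) = x j' /\<^sub>R (v \<bullet> x j')"
      by (auto simp: A_def)
    moreover have "x j = ((v \<bullet> x j) / (v \<bullet> x j')) *\<^sub>R x j'"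
    proof -
      have "x j = (v \<bullet> x j) *\<^sub>R (x j /\<^sub>R (v \<bullet> x j))"
        using v[of j] by simp
      also have "\<dots> = (v \<bullet> x j) *\<^sub>R (x j' /\<^sub>R (v \<bullet> x j'))"
        by (simp only: \<open>x j /\<^sub>R (v \<bullet> x j) = x j' /\<^sub>R (v \<bullet> x j')\<close>)
      finally show ?thesis
        by (simp add: divide_inverse)
    qed
    ultimately show False
      using assms(2) span_base span_scale by (metis insertI1)
  qed
  then obtain u where u: "\<forall>a\<in>A. a \<bullet> u \<noteq> 0"
    using exists_inner_nonzero_finite[of A] by (auto simp: A_def)
  have "inj (\<lambda>j. (u \<bullet> x j) / (v \<bullet> x j))"
  proof (rule injI, rule ccontr)
    fix j j' assume "(u \<bullet> x j) / (v \<bullet> x j) = (u \<bullet> x j') / (v \<bullet> x j')" "j \<noteq> j'"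
    moreover have "(x j /\<^sub>R (v \<bullet> x j) - x j' /\<^sub>R (v \<bullet> x j')) \<bullet> u \<noteq> 0"
      using u \<open>j \<noteq> j'\<close> by (auto simp: A_def)
    ultimately show False
      by (simp add: inner_diff_left inner_commute[of u] divide_inverse mult.commute)
  qed
  with v show thesis
    by (rule that)
qed

lemma exists_monotone_blocks:
  fixes r :: "'j::finite \<Rightarrow> real"
  assumes "inj r" "CARD('j) \<le> k * m"
  obtains g :: "'j \<Rightarrow> nat" where "\<And>j. g j < k" "\<And>p. card {j. g j = p} \<le> m"
    "\<And>j j'. r j < r j' \<Longrightarrow> g j \<le> g j'"
proof -
  define rk where "rk j = card {j'. r j' < r j}" for j
  have rk_mono: "rk j < rk j'" if "r j < r j'" for j j'
    unfolding rk_def using that by (intro psubset_card_mono) auto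
  have "inj rk"
    by (rule injI) (metis assms(1) injD less_irrefl linorder_neqE rk_mono)
  have rk_less: "rk j < k * m" for j
  proof -
    have "rk j < CARD('j)"
      unfolding rk_def by (intro psubset_card_mono) auto
    then show ?thesis
      using assms(2) by linarith
  qed
  then have "m > 0"
    by (metis mult_0_right not_less_zero neq0_conv)
  define g where "g j = rk j div m" for j
  have "card {j. g j = p} \<le> m" for p
  proof -
    have "rk j \<in> {p * m..<p * m + m}" if "g j = p" for j
    proof -
      have "rk j = p * m + rk j mod m"
        using that div_mult_mod_eq[of "rk j" m] by (simp add: g_def)
      then show ?thesis
        using mod_less_divisor[OF \<open>m > 0\<close>, of "rk j"] by auto
    qed
    then have "rk ` {j. g j = p} \<subseteq> {p * m..<p * m + m}"
      by auto
    then have "card (rk ` {j. g j = p}) \<le> m"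
      using card_mono[of "{p * m..<p * m + m}"] by fastforce
    then show ?thesis
      using \<open>inj rk\<close> by (simp add: card_image inj_on_subset)
  qed
  moreover have "g j < k" for j
    using rk_less[of j] by (simp add: g_def less_mult_imp_div_less)
  moreover have "g j \<le> g j'" if "r j < r j'" for j j'
    using rk_mono[OF that] by (simp add: g_def div_le_mono)
  ultimately show thesis
    using that by blast
qed

lemma finite_sets_strictly_separated:
  fixes A B :: "real set"
  assumes "finite A" "finite B" "\<And>a b. a \<in> A \<Longrightarrow> b \<in> B \<Longrightarrow> a < b"
  obtains t where "\<And>a. a \<in> A \<Longrightarrow> a < t" "\<And>b. b \<in> B \<Longrightarrow> t < b"
proof -
  consider "A = {}" | "B = {}" | "A \<noteq> {}" "B \<noteq> {}"
    by blast
  then show thesis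
  proof cases
    case 1
    have "Min (insert 0 B) \<le> b" if "b \<in> B" for b
      using assms(2) that by simp
    with 1 show thesis
      by (intro that[of "Min (insert 0 B) - 1"]) force+
  next
    case 2
    have "a \<le> Max (insert 0 A)" if "a \<in> A" for a
      using assms(1) that by simp
    with 2 show thesis
      by (intro that[of "Max (insert 0 A) + 1"]) force+
  next
    case 3
    then have "Max A < Min B"
      using assms by (simp add: Max_in Min_in)
    moreover have "a \<le> Max A" if "a \<in> A" for a
      using assms(1) that by simp
    moreover have "Min B \<le> b" if "b \<in> B" for b
      using assms(2) that by simp
    ultimately show thesis
      by (intro that[of "(Max A + Min B) / 2"]) force+
  qed
qed

lemma exists_block_thresholds:
  fixes r :: "'j::finite \<Rightarrow> real" and g :: "'j \<Rightarrow> nat"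
  assumes "inj r" "\<And>j j'. r j < r j' \<Longrightarrow> g j \<le> g j'"
  obtains t :: "nat \<Rightarrow> real" where "\<And>i j. r j < t i \<longleftrightarrow> g j \<le> i" "\<And>i j. t i < r j \<longleftrightarrow> i < g j"
proof -
  have "\<exists>t. (\<forall>j. g j \<le> i \<longrightarrow> r j < t) \<and> (\<forall>j. i < g j \<longrightarrow> t < r j)" for i
  proof -
    have separated: "r j < r j'" if "g j \<le> i" "i < g j'" for j j'
      using that assms by (metis injD leD le_less_trans linorder_neqE)
    obtain t where "\<And>a. a \<in> r ` {j. g j \<le> i} \<Longrightarrow> a < t" "\<And>b. b \<in> r ` {j. i < g j} \<Longrightarrow> t < b"
      by (rule finite_sets_strictly_separated[of "r ` {j. g j \<le> i}" "r ` {j. i < g j}"])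
        (use separated in auto)
    then show ?thesis
      by (intro exI[of _ t]) auto
  qed
  then obtain t where lower: "\<And>i j. g j \<le> i \<Longrightarrow> r j < t i"
    and upper: "\<And>i j. i < g j \<Longrightarrow> t i < r j"
    by metis
  show thesis
  proof (rule that)
    fix i j
    show "r j < t i \<longleftrightarrow> g j \<le> i" "t i < r j \<longleftrightarrow> i < g j"
      using lower[of j i] upper[of i j] by (meson less_asym not_le)+
  qed
qed

lemma solve_block_staircase:
  fixes x :: "'j \<Rightarrow> 'a::real_inner" and g :: "'j \<Rightarrow> nat" and \<sigma> :: "'j \<Rightarrow> bool"
  assumes "\<alpha> \<noteq> 0" "\<alpha> \<noteq> 1" "\<And>j. g j < k"
    and solvable: "\<And>p c. \<exists>s. \<forall>j. g j = p \<longrightarrow> s \<bullet> x j = c j"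
  shows "\<exists>\<delta> :: nat \<Rightarrow> 'a. \<forall>j. (\<Sum>i<k. (if \<sigma> j \<longleftrightarrow> g j \<le> i then 1 else \<alpha>) * (\<delta> i \<bullet> x j)) = y j"
proof -
  obtain S where S: "\<And>j. g j = 0 \<Longrightarrow> S \<bullet> x j = (if \<sigma> j then y j else y j / \<alpha>)"
    using solvable[of 0 "\<lambda>j. if \<sigma> j then y j else y j / \<alpha>"] by blast
  define c where
    "c j = (if \<sigma> j then (S \<bullet> x j - y j) / (1 - \<alpha>) else (y j - \<alpha> * (S \<bullet> x j)) / (1 - \<alpha>))" for j
  obtain Z' where Z': "\<And>p j. g j = p \<Longrightarrow> Z' p \<bullet> x j = c j"
    using solvable[of _ c] by metis
  \<comment> \<open>Z p is the partial sum of the first p weight increments; the last partial sum is S.\<close>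
  define Z where "Z p = (if p = 0 then 0 else if p < k then Z' p else S)" for p
  have staircase: "(\<Sum>i<k. (if \<sigma> j \<longleftrightarrow> g j \<le> i then 1 else \<alpha>) * ((Z (Suc i) - Z i) \<bullet> x j)) = y j"
    for j
  proof -
    have "k > 0"
      using assms(3)[of j] by simp
    have "(\<Sum>i<k. (if \<sigma> j \<longleftrightarrow> g j \<le> i then 1 else \<alpha>) * ((Z (Suc i) - Z i) \<bullet> x j))
        = (\<Sum>i<k. (if i < g j then (if \<sigma> j then \<alpha> else 1) else (if \<sigma> j then 1 else \<alpha>))
              * (Z (Suc i) \<bullet> x j - Z i \<bullet> x j))"
      by (intro sum.cong) (auto simp: inner_diff_left)
    also have "\<dots> = (if \<sigma> j then \<alpha> else 1) * (Z (g j) \<bullet> x j)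
        + (if \<sigma> j then 1 else \<alpha>) * (S \<bullet> x j - Z (g j) \<bullet> x j)"
      using sum_two_slopes_telescope[of "g j" k _ _ "\<lambda>p. Z p \<bullet> x j"] assms(3)[of j] \<open>k > 0\<close>
      by (simp add: Z_def)
    also have "\<dots> = y j"
      using S[of j] Z'[of j "g j"] assms(1,2) assms(3)[of j]
      by (cases "g j = 0") (auto simp: Z_def c_def field_simps)
    finally show ?thesis .
  qed
  show ?thesis
    by (rule exI[of _ "\<lambda>i. Z (Suc i) - Z i"]) (simp add: staircase)
qed

lemma neuron_pairs_realize_slopes:
  fixes x :: "'j::finite \<Rightarrow> 'a::real_inner" and b \<delta> :: "nat \<Rightarrow> 'a"
  assumes "\<alpha> \<le> 1" "\<And>i j. i < k \<Longrightarrow> b i \<bullet> x j \<noteq> 0"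
  shows "\<exists>W. \<forall>j. (\<Sum>i<2 * k. vtilde k 1 i * leaky_relu \<alpha> (W i \<bullet> x j))
                = (\<Sum>i<k. (if 0 < b i \<bullet> x j then 1 else \<alpha>) * (\<delta> i \<bullet> x j))"
proof -
  obtain c where c: "c > 0" "\<And>i j. i < k \<Longrightarrow> \<bar>\<delta> i \<bullet> x j\<bar> < c * \<bar>b i \<bullet> x j\<bar>"
    using exists_scale_dominating[of "{..<k} \<times> UNIV" "\<lambda>(i, j). b i \<bullet> x j" "\<lambda>(i, j). \<delta> i \<bullet> x j"]
      assms(2) by auto
  \<comment> \<open>For large c the pair c b + \<delta>, c b lies on one linear piece of the activation at every point.\<close>
  define W where "W i = (if i < k then c *\<^sub>R b i + \<delta> i else c *\<^sub>R b (i - k))" for i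
  have "leaky_relu \<alpha> (W i \<bullet> x j) - leaky_relu \<alpha> (W (i + k) \<bullet> x j)
      = (if 0 < b i \<bullet> x j then 1 else \<alpha>) * (\<delta> i \<bullet> x j)" if "i < k" for i j
  proof -
    have "\<bar>\<delta> i \<bullet> x j\<bar> < \<bar>c * (b i \<bullet> x j)\<bar>"
      using c that by (simp add: abs_mult)
    moreover have "0 < c * (b i \<bullet> x j) \<longleftrightarrow> 0 < b i \<bullet> x j"
      using c(1) by (simp add: zero_less_mult_iff)
    ultimately show ?thesis
      using that leaky_relu_add_small[OF assms(1)] by (simp add: W_def inner_add_left)
  qed
  then show ?thesis
    by (intro exI[of _ W] allI) (simp add: sum_lessThan_double vtilde_def sum_subtractf)
qed

lemma le_mult_of_ceiling_bound:
  fixes n d k :: nat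
  assumes "d \<ge> 2" "int k \<ge> 2 * \<lceil>real n / (2 * real d - 2)\<rceil>"
  shows "n \<le> k * (d - 1)"
proof -
  have "2 * (real n / (2 * real d - 2)) \<le> real k"
    using assms(2) le_of_int_ceiling[of "real n / (2 * real d - 2)"] by linarith
  then have "real n \<le> real k * (real d - 1)"
    using assms(1) by (simp add: field_simps)
  also have "\<dots> = real (k * (d - 1))"
    using assms(1) by (simp add: of_nat_diff)
  finally show ?thesis
    by linarith
qed

lemma exists_block_hyperplanes:
  fixes x :: "'j::finite \<Rightarrow> 'a::euclidean_space"
  assumes "\<And>j. x j \<noteq> 0" "\<And>j j'. j \<noteq> j' \<Longrightarrow> x j \<notin> span {x j'}" "CARD('j) \<le> k * m"
  obtains g :: "'j \<Rightarrow> nat" and b :: "nat \<Rightarrow> 'a" and v :: 'a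
  where "\<And>j. g j < k" "\<And>p. card {j. g j = p} \<le> m" "\<And>i j. b i \<bullet> x j \<noteq> 0"
    "\<And>i j. 0 < b i \<bullet> x j \<longleftrightarrow> (0 < v \<bullet> x j \<longleftrightarrow> g j \<le> i)"
proof -
  obtain u v where v: "\<And>j. v \<bullet> x j \<noteq> 0" and "inj (\<lambda>j. (u \<bullet> x j) / (v \<bullet> x j))"
    using exists_injective_ratio[of x, OF assms(1,2)] by blast
  define r where "r j = (u \<bullet> x j) / (v \<bullet> x j)" for j
  have "inj r"
    unfolding r_def by fact
  then obtain g where blocks: "\<And>j. g j < k" "\<And>p. card {j. g j = p} \<le> m"
    and g_mono: "\<And>j j'. r j < r j' \<Longrightarrow> g j \<le> g j'"
    using exists_monotone_blocks assms(3) by metis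
  obtain t where t: "\<And>i j. r j < t i \<longleftrightarrow> g j \<le> i" "\<And>i j. t i < r j \<longleftrightarrow> i < g j"
    using exists_block_thresholds[of r g] \<open>inj r\<close> g_mono by blast
  define b where "b i = t i *\<^sub>R v - u" for i
  have b_x: "b i \<bullet> x j = (v \<bullet> x j) * (t i - r j)" for i j
    using v[of j] by (simp add: b_def r_def inner_diff_left field_simps)
  have "b i \<bullet> x j \<noteq> 0" for i j
    using t(1)[of j i] t(2)[of i j] v[of j] unfolding b_x by (smt (verit) mult_eq_0_iff not_le)
  moreover have "0 < b i \<bullet> x j \<longleftrightarrow> (0 < v \<bullet> x j \<longleftrightarrow> g j \<le> i)" for i j
    using t(1)[of j i] t(2)[of i j] v[of j] unfolding b_x by (smt (verit) zero_less_mult_iff not_le)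
  ultimately show thesis
    by (rule that[OF blocks])
qed

lemma leaky_relu_network_interpolates:
  fixes x :: "'j::finite \<Rightarrow> 'a::euclidean_space" and y :: "'j \<Rightarrow> real"
  assumes "0 < \<alpha>" "\<alpha> < 1" "DIM('a) \<ge> 2" "CARD('j) \<le> k * DIM('a)" "general_position x"
  shows "\<exists>W :: nat \<Rightarrow> 'a. \<forall>j. y j = (\<Sum>i<2 * k. vtilde k 1 i * leaky_relu \<alpha> (W i \<bullet> x j))"
proof -
  have nonzero: "x j \<noteq> 0" for j
    using assms(5) by (rule general_position_nonzero)
  have not_parallel: "x j \<notin> span {x j'}" if "j \<noteq> j'" for j j'
    using assms(5,3) that by (rule general_position_not_parallel)
  obtain g :: "'j \<Rightarrow> nat" and b :: "nat \<Rightarrow> 'a" and v :: 'a where g_less: "\<And>j. g j < k" and g_card: "\<And>p. card {j. g j = p} \<le> DIM('a)"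
    and b_nonzero: "\<And>i j. b i \<bullet> x j \<noteq> 0"
    and b_sign: "\<And>i j. 0 < b i \<bullet> x j \<longleftrightarrow> (0 < v \<bullet> x j \<longleftrightarrow> g j \<le> i)"
    using exists_block_hyperplanes[of x k "DIM('a)"] nonzero not_parallel assms(4) by blast
  have "\<exists>s. \<forall>j. g j = p \<longrightarrow> s \<bullet> x j = c j" for p c
    using general_position_inner_interpolation[OF assms(5) _ g_card, of p c] by auto
  then obtain \<delta> where \<delta>:
    "\<forall>j. (\<Sum>i<k. (if 0 < v \<bullet> x j \<longleftrightarrow> g j \<le> i then 1 else \<alpha>) * (\<delta> i \<bullet> x j)) = y j"
    using solve_block_staircase[of \<alpha> g k x "\<lambda>j. 0 < v \<bullet> x j" y] assms(1,2) g_less by auto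
  obtain W where "\<forall>j. (\<Sum>i<2 * k. vtilde k 1 i * leaky_relu \<alpha> (W i \<bullet> x j))
      = (\<Sum>i<k. (if 0 < b i \<bullet> x j then 1 else \<alpha>) * (\<delta> i \<bullet> x j))"
    using neuron_pairs_realize_slopes[of \<alpha> k b x \<delta>] assms(2) b_nonzero by auto
  then show ?thesis
    using \<delta> by (intro exI[of _ W]) (simp add: b_sign)
qed

theorem theorem5:
  fixes \<alpha> :: real and k :: nat and y :: "real ^ 'n"
  assumes "0 < \<alpha>" and "\<alpha> < 1"
    and "CARD('d::finite) \<ge> 2"
    and "int k \<ge> 2 * \<lceil>real CARD('n::finite) / (2 * real CARD('d) - 2)\<rceil>"
    and "\<forall>j. y $ j \<in> {-1, 1}"
  shows "AE X in (lborel :: (real ^ 'n ^ 'd) measure).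
           \<exists>(W :: nat \<Rightarrow> real ^ 'd) (v :: real). v > 0 \<and>
             (\<forall>j. y $ j = (\<Sum>i<2*k. vtilde k v i * leaky_relu \<alpha> (W i \<bullet> column j X)))"
  using AE_columns_general_position
proof (rule eventually_mono)
  fix X :: "real ^ 'n ^ 'd"
  assume gp: "general_position (\<lambda>j. column j X)"
  have "CARD('n) \<le> k * (CARD('d) - 1)"
    using le_mult_of_ceiling_bound assms(3,4) by blast
  then have "CARD('n) \<le> k * DIM(real ^ 'd)"
    by (simp add: order_trans[OF _ mult_le_mono2[OF diff_le_self]])
  then obtain W :: "nat \<Rightarrow> real ^ 'd"
    where "\<forall>j. y $ j = (\<Sum>i<2 * k. vtilde k 1 i * leaky_relu \<alpha> (W i \<bullet> column j X))"
    using leaky_relu_network_interpolates[OF assms(1,2) _ _ gp, where y="\<lambda>j. y $ j"] assms(3) by auto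
  then show "\<exists>W v. v > 0 \<and> (\<forall>j. y $ j = (\<Sum>i<2*k. vtilde k v i * leaky_relu \<alpha> (W i \<bullet> column j X)))"
    by (intro exI[of _ W] exI[of _ "1::real"]) simp
qed

end
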